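(* Let $A$ be a unital JB$^*$-algebra, $T:A\to A$ a bounded linear map which is triple derivable at orthogonal pairs, and $e$ a tripotent in $A$. Let $T_e=P_2(e)T|_{A_2(e)}:A_2(e)\to A_2(e)$. Suppose $\delta:A\to A$ is a triple derivation and $\xi$ is a self-adjoint element of the centre of $A$ with $T(a)=\delta(a)+\xi\circ a$ for all $a\in A$, and suppose $\delta_e:A_2(e)\to A_2(e)$ is a triple derivation and $\xi_e$ is a self-adjoint element of the centre of the JB$^*$-algebra $A_2(e)$ (self-adjoint meaning $\xi_e^{*_e}=\xi_e$) with $T_e(a)=\delta_e(a)+\xi_e\circ_e a$ for all $a\in A_2(e)$. Then $\xi\circ e=\xi_e$.
   Context: A JB$^*$-algebra is a complex Jordan Banach algebra with algebra involution $^*$ such that $\|\{a,a,a\}\|=\|a\|^3$; it is a JB$^*$-triple with triple product $\{x,y,z\}=(x\circ y^* )\circ z+(z\circ y^* )\circ x-(x\circ z)\circ y^*$. Elements $a,b$ are orthogonal if $\{a,b,x\}=0$ for all $x$. A linear map $T$ is triple derivable at orthogonal pairs if $\{T(a),b,c\}+\{a,T(b),c\}+\{a,b,T(c)\}=0$ for all $a,b,c$ with $a\perp b$. A triple derivation satisfies $\delta\{a,b,c\}=\{\delta a,b,c\}+\{a,\delta b,c\}+\{a,b,\delta c\}$. A tripotent is $e$ with $\{e,e,e\}=e$; $A_2(e)=\{x:\{e,e,x\}=x\}$ with Peirce projection $P_2(e)$; $A_2(e)$ is a unital JB$^*$-algebra with product $x\circ_e y=\{x,e,y\}$ and involution $x^{*_e}=\{e,x,e\}$.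 The centre of a JB$^*$-algebra $B$ is the set of $z$ with $(z\circ c)\circ y=z\circ(c\circ y)$ for all $c,y\in B$. *)

theory Defs
  imports "HOL-Analysis.Analysis"
begin

text \<open>A complex Banach space is modelled as a real Banach space ('a :: banach)
  together with a complex scalar multiplication sc extending the real one.\<close>
definition complex_scalar :: "(complex \<Rightarrow> 'a::real_normed_vector \<Rightarrow> 'a) \<Rightarrow> bool" where
  "complex_scalar sc \<longleftrightarrow>
     (\<forall>r x. sc (complex_of_real r) x = r *\<^sub>R x) \<and>
     (\<forall>a b x. sc (a * b) x = sc a (sc b x)) \<and>
     (\<forall>a x y. sc a (x + y) = sc a x + sc a y) \<and>
     (\<forall>a b x. sc (a + b) x = sc a x + sc b x) \<and>
     (\<forall>a x. norm (sc a x) = cmod a * norm x)"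

definition tp :: "('a::ab_group_add \<Rightarrow> 'a \<Rightarrow> 'a) \<Rightarrow> ('a \<Rightarrow> 'a) \<Rightarrow> 'a \<Rightarrow> 'a \<Rightarrow> 'a \<Rightarrow> 'a" where
  "tp jp st x y z = jp (jp x (st y)) z + jp (jp z (st y)) x - jp (jp x z) (st y)"

definition JBstar_algebra ::
  "(complex \<Rightarrow> 'a::banach \<Rightarrow> 'a) \<Rightarrow> ('a \<Rightarrow> 'a \<Rightarrow> 'a) \<Rightarrow> ('a \<Rightarrow> 'a) \<Rightarrow> bool" where
  "JBstar_algebra sc jp st \<longleftrightarrow>
     complex_scalar sc \<and>
     \<comment> \<open>complex bilinear, commutative Jordan product, submultiplicative norm\<close>
     (\<forall>x y z. jp (x + y) z = jp x z + jp y z) \<and>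
     (\<forall>a x y. jp (sc a x) y = sc a (jp x y)) \<and>
     (\<forall>x y. jp x y = jp y x) \<and>
     (\<forall>x y. jp (jp x y) (jp x x) = jp x (jp y (jp x x))) \<and>
     (\<forall>x y. norm (jp x y) \<le> norm x * norm y) \<and>
     \<comment> \<open>algebra involution: conjugate linear, involutive, multiplicative\<close>
     (\<forall>x y. st (x + y) = st x + st y) \<and>
     (\<forall>a x. st (sc a x) = sc (cnj a) (st x)) \<and>
     (\<forall>x. st (st x) = x) \<and>
     (\<forall>x y. st (jp x y) = jp (st x) (st y)) \<and>
     \<comment> \<open>JB*-identity\<close>
     (\<forall>a. norm (tp jp st a a a) = norm a ^ 3)"

definition unital_JBstar_algebra ::
  "(complex \<Rightarrow> 'a::banach \<Rightarrow> 'a) \<Rightarrow> ('a \<Rightarrow> 'a \<Rightarrow> 'a) \<Rightarrow> ('a \<Rightarrow> 'a) \<Rightarrow> 'a \<Rightarrow> bool" where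
  "unital_JBstar_algebra sc jp st u \<longleftrightarrow> JBstar_algebra sc jp st \<and> (\<forall>x. jp u x = x)"

definition clinear_map :: "(complex \<Rightarrow> 'a::ab_group_add \<Rightarrow> 'a) \<Rightarrow> ('a \<Rightarrow> 'a) \<Rightarrow> bool" where
  "clinear_map sc f \<longleftrightarrow> (\<forall>x y. f (x + y) = f x + f y) \<and> (\<forall>a x. f (sc a x) = sc a (f x))"

definition orth :: "('a::ab_group_add \<Rightarrow> 'a \<Rightarrow> 'a) \<Rightarrow> ('a \<Rightarrow> 'a) \<Rightarrow> 'a \<Rightarrow> 'a \<Rightarrow> bool" where
  "orth jp st a b \<longleftrightarrow> (\<forall>x. tp jp st a b x = 0)"

definition triple_derivable_orth :: "('a::ab_group_add \<Rightarrow> 'a \<Rightarrow> 'a) \<Rightarrow> ('a \<Rightarrow> 'a) \<Rightarrow> ('a \<Rightarrow> 'a) \<Rightarrow> bool" where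
  "triple_derivable_orth jp st T \<longleftrightarrow>
     (\<forall>a b c. orth jp st a b \<longrightarrow>
        tp jp st (T a) b c + tp jp st a (T b) c + tp jp st a b (T c) = 0)"

definition triple_derivation_on ::
  "'a::ab_group_add set \<Rightarrow> (complex \<Rightarrow> 'a \<Rightarrow> 'a) \<Rightarrow> ('a \<Rightarrow> 'a \<Rightarrow> 'a) \<Rightarrow> ('a \<Rightarrow> 'a) \<Rightarrow> ('a \<Rightarrow> 'a) \<Rightarrow> bool" where
  "triple_derivation_on S sc jp st d \<longleftrightarrow>
     d ` S \<subseteq> S \<and>
     (\<forall>x\<in>S. \<forall>y\<in>S. d (x + y) = d x + d y) \<and>
     (\<forall>a. \<forall>x\<in>S. d (sc a x) = sc a (d x)) \<and>
     (\<forall>a\<in>S. \<forall>b\<in>S. \<forall>c\<in>S.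
        d (tp jp st a b c) = tp jp st (d a) b c + tp jp st a (d b) c + tp jp st a b (d c))"

definition tripotent :: "('a::ab_group_add \<Rightarrow> 'a \<Rightarrow> 'a) \<Rightarrow> ('a \<Rightarrow> 'a) \<Rightarrow> 'a \<Rightarrow> bool" where
  "tripotent jp st e \<longleftrightarrow> tp jp st e e e = e"

definition peirce2 :: "('a::ab_group_add \<Rightarrow> 'a \<Rightarrow> 'a) \<Rightarrow> ('a \<Rightarrow> 'a) \<Rightarrow> 'a \<Rightarrow> 'a set" where
  "peirce2 jp st e = {x. tp jp st e e x = x}"

definition P2 :: "('a::ab_group_add \<Rightarrow> 'a \<Rightarrow> 'a) \<Rightarrow> ('a \<Rightarrow> 'a) \<Rightarrow> 'a \<Rightarrow> 'a \<Rightarrow> 'a" where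
  "P2 jp st e x = tp jp st e (tp jp st e x e) e"

definition prod_e :: "('a::ab_group_add \<Rightarrow> 'a \<Rightarrow> 'a) \<Rightarrow> ('a \<Rightarrow> 'a) \<Rightarrow> 'a \<Rightarrow> 'a \<Rightarrow> 'a \<Rightarrow> 'a" where
  "prod_e jp st e x y = tp jp st x e y"

definition star_e :: "('a::ab_group_add \<Rightarrow> 'a \<Rightarrow> 'a) \<Rightarrow> ('a \<Rightarrow> 'a) \<Rightarrow> 'a \<Rightarrow> 'a \<Rightarrow> 'a" where
  "star_e jp st e x = tp jp st e x e"

definition centre_on :: "'a set \<Rightarrow> ('a \<Rightarrow> 'a \<Rightarrow> 'a) \<Rightarrow> 'a set" where
  "centre_on S jp = {z \<in> S. \<forall>c\<in>S. \<forall>y\<in>S. jp (jp z c) y = jp z (jp c y)}"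

end

theory Submission
  imports Defs
begin

text \<open>For a tripotent \<open>e\<close> the operators \<open>Q(e) = {e,-,e}\<close> and \<open>L(e,e) = {e,e,-}\<close> satisfy
  \<open>Q(e) L(e,e) = L(e,e) Q(e) = Q(e)\<close>; these are two instances of the Jordan triple identity,
  which in a Jordan *-algebra are linear combinations of the linearised Jordan identity.
  Differentiating \<open>{e,e,e} = e\<close> gives \<open>\<delta>(e) = 2{e,e,\<delta>(e)} + Q(e)\<delta>(e)\<close>, so \<open>Q(e)\<close> negates
  \<open>P\<^sub>2(e)\<delta>(e) = Q(e)\<^sup>2\<delta>(e)\<close>; in \<open>A\<^sub>2(e)\<close>, where \<open>e\<close> is the unit, the same computation shows
  that \<open>Q(e)\<close> negates \<open>\<delta>\<^sub>e(e)\<close>. Evaluating both decompositions of \<open>T\<close> at \<open>e\<close> gives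
  \<open>\<xi>\<^sub>e - \<xi>\<circ>e = P\<^sub>2(e)\<delta>(e) - \<delta>\<^sub>e(e)\<close>, which \<open>Q(e)\<close> therefore negates; but \<open>Q(e)\<close> also fixes it,
  since \<open>\<xi>\<^sub>e\<close> and \<open>\<xi>\<circ>e\<close> are self-adjoint in \<open>A\<^sub>2(e)\<close>. Hence it vanishes.\<close>

lemma neg_eq_self_iff: "- (x::'a::real_vector) = x \<longleftrightarrow> x = 0"
  by (metis add.inverse_neutral eq_neg_iff_add_eq_0 scaleR_2 scaleR_eq_0_iff zero_neq_numeral)

locale jordan_star_algebra =
  fixes jp :: "'a::real_vector \<Rightarrow> 'a \<Rightarrow> 'a" and st :: "'a \<Rightarrow> 'a"
  assumes jp_add_left: "jp (x + y) z = jp x z + jp y z"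
    and jp_commute: "jp x y = jp y x"
    and jordan_identity: "jp (jp x y) (jp x x) = jp x (jp y (jp x x))"
    and st_add: "st (x + y) = st x + st y"
    and st_jp: "st (jp x y) = jp (st x) (st y)"
    and st_st: "st (st x) = x"
begin

lemma jp_add_right: "jp x (y + z) = jp x y + jp x z"
  using jp_add_left[of y z x] by (simp add: jp_commute)

lemma jp_zero_left: "jp 0 z = 0"
  using jp_add_left[of 0 0 z] by simp

lemma jp_zero_right: "jp z 0 = 0"
  using jp_zero_left[of z] by (simp add: jp_commute)

lemma jp_minus_left: "jp (- x) z = - jp x z"
  using jp_add_left[of "- x" x z] by (simp add: jp_zero_left eq_neg_iff_add_eq_0)

lemma jp_minus_right: "jp z (- x) = - jp z x"
  using jp_minus_left by (simp add: jp_commute)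

lemma jp_diff_left: "jp (x - y) z = jp x z - jp y z"
  using jp_add_left[of x "- y" z] by (simp add: jp_minus_left)

lemma jp_diff_right: "jp z (x - y) = jp z x - jp z y"
  using jp_diff_left by (simp add: jp_commute)

lemmas jp_distribs = jp_add_left jp_add_right jp_diff_left jp_diff_right
  jp_minus_left jp_minus_right jp_zero_left jp_zero_right

definition jordan_defect :: "'a \<Rightarrow> 'a \<Rightarrow> 'a \<Rightarrow> 'a \<Rightarrow> 'a" where
  "jordan_defect a b c y =
     (jp (jp (jp a b) y) c + jp (jp (jp b c) y) a + jp (jp (jp c a) y) b) -
     (jp (jp a b) (jp y c) + jp (jp b c) (jp y a) + jp (jp c a) (jp y b))"

lemma jordan_defect_eq_0: "jordan_defect a b c y = 0"
proof -
  \<comment> \<open>polarise the cubic map \<open>j\<close>, which vanishes by the Jordan identity\<close>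
  define j where "j x = jp (jp x y) (jp x x) - jp x (jp y (jp x x))" for x
  have "j (a + b + c) - j (a + b) - j (b + c) - j (a + c) + j a + j b + j c =
      - (jordan_defect a b c y + jordan_defect a b c y)"
    unfolding j_def jordan_defect_def by (simp add: jp_distribs algebra_simps jp_commute)
  then show ?thesis
    by (simp add: j_def jordan_identity neg_eq_self_iff)
qed

definition jtp :: "'a \<Rightarrow> 'a \<Rightarrow> 'a \<Rightarrow> 'a" where
  "jtp a b c = jp (jp a b) c + jp (jp c b) a - jp (jp a c) b"

text \<open>The Jordan triple identity \<open>{a,b,{c,d,x}} = {{a,b,c},d,x} - {c,{b,a,d},x} + {c,d,{a,b,x}}\<close>
  for \<open>c = x = a\<close>.\<close>

lemma jtp_identity:
  "jtp a b (jtp a c a) + jtp a (jtp b a c) a = jtp (jtp a b a) c a + jtp a c (jtp a b a)"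
proof -
  let ?D = jordan_defect
  have "jtp a b (jtp a c a) + jtp a (jtp b a c) a - (jtp (jtp a b a) c a + jtp a c (jtp a b a)) =
      ?D a a (jp a c) b - jp a (?D a a b c) + 2 *\<^sub>R 2 *\<^sub>R ?D c a (jp b a) a
    - 2 *\<^sub>R ?D b a (jp a c) a + 2 *\<^sub>R jp a (?D a a c b) + jp b (?D a a a c)
    - ?D c a a (jp b a) + 2 *\<^sub>R ?D b a a (jp a c) + ?D b c a (jp a a)
    - 2 *\<^sub>R ?D a a (jp b a) c - 2 *\<^sub>R ?D b c (jp a a) a - ?D (jp b c) a a a"
    unfolding jtp_def jordan_defect_def by (simp add: jp_distribs algebra_simps jp_commute scaleR_2)
  then show ?thesis
    by (simp add: jordan_defect_eq_0 jp_zero_right)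
qed

lemma st_zero: "st 0 = 0"
  using st_add[of 0 0] by simp

lemma st_minus: "st (- x) = - st x"
  using st_add[of "- x" x] by (simp add: st_zero eq_neg_iff_add_eq_0)

lemma st_diff: "st (x - y) = st x - st y"
  using st_add[of x "- y"] by (simp add: st_minus)

lemma tp_eq_jtp: "tp jp st a b c = jtp a (st b) c"
  by (simp add: tp_def jtp_def)

lemma st_jtp: "st (jtp a b c) = jtp (st a) (st b) (st c)"
  by (simp add: jtp_def st_add st_diff st_jp)

lemma tp_commute: "tp jp st x y z = tp jp st z y x"
  unfolding tp_def by (simp add: jp_commute[of x z] algebra_simps)

lemma tp_add_middle: "tp jp st x (y + y') z = tp jp st x y z + tp jp st x y' z"
  by (simp add: tp_def jp_distribs st_add algebra_simps)

lemma tp_minus_middle: "tp jp st x (- y) z = - tp jp st x y z"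
  by (simp add: tp_def jp_distribs st_minus algebra_simps)

lemma tp_diff_middle: "tp jp st x (y - y') z = tp jp st x y z - tp jp st x y' z"
  by (simp add: tp_def jp_distribs st_diff algebra_simps)

lemma tp_identity:
  "tp jp st a b (tp jp st a c a) + tp jp st a (tp jp st b a c) a =
   tp jp st (tp jp st a b a) c a + tp jp st a c (tp jp st a b a)"
  using jtp_identity[of a "st b" "st c"] by (simp add: tp_eq_jtp st_jtp st_st)

abbreviation Q :: "'a \<Rightarrow> 'a \<Rightarrow> 'a" where
  "Q e x \<equiv> tp jp st e x e"

lemma tripotent_Q_L_L_Q:
  assumes "tripotent jp st e"
  shows "Q e (tp jp st e e x) = Q e x" and "tp jp st e e (Q e x) = Q e x"
proof -
  define p q r where "p = tp jp st e e (Q e x)" and "q = Q e (tp jp st e e x)" and "r = Q e x"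
  have e: "tp jp st e e e = e"
    using assms by (simp add: tripotent_def)
  have pq: "p + q = r + r"
    using tp_identity[of e e x] by (simp add: e p_def q_def r_def)
  have rq: "r + q = p + p"
    using tp_identity[of e x e] tp_commute[of "Q e x" e e] tp_commute[of x e e]
    by (simp add: e p_def q_def r_def)
  have "p + p + p = r + r + r"
    using pq rq by (metis add.assoc add.commute add_right_cancel)
  then have "(1 + 2) *\<^sub>R p = (1 + 2) *\<^sub>R r"
    by (simp only: scaleR_add_left scaleR_one scaleR_2 add.assoc)
  then have "p = r" by simp
  with pq have "q = r" by simp
  with \<open>p = r\<close> show "Q e (tp jp st e e x) = Q e x" and "tp jp st e e (Q e x) = Q e x"
    by (simp_all add: p_def q_def r_def)
qed

lemma tp_central_middle:
  assumes "z \<in> centre_on UNIV jp" and "st z = z"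
  shows "tp jp st a (jp z b) c = jp z (tp jp st a b c)"
proof -
  have central: "jp (jp z x) y = jp z (jp x y)" for x y
    using assms(1) by (simp add: centre_on_def)
  then have central': "jp y (jp z x) = jp z (jp x y)" "jp (jp x z) y = jp z (jp x y)"
    "jp y (jp x z) = jp z (jp x y)" for x y
    by (metis jp_commute)+
  show ?thesis
    by (simp add: tp_def central central' jp_distribs jp_commute st_jp assms(2))
qed

lemma triple_derivation_tripotent_Q_Q:
  assumes "triple_derivation_on UNIV sc jp st \<delta>" and "tripotent jp st e"
  shows "Q e (Q e (\<delta> e)) = - Q e (\<delta> e)"
proof -
  have e: "tp jp st e e e = e"
    using assms(2) by (simp add: tripotent_def)
  have "\<delta> e = tp jp st e e (\<delta> e) + Q e (\<delta> e) + tp jp st e e (\<delta> e)"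
    using assms(1) e[THEN arg_cong, of \<delta>] tp_commute[of "\<delta> e" e e]
    by (simp add: triple_derivation_on_def)
  then have "Q e (\<delta> e) = Q e (\<delta> e) + Q e (Q e (\<delta> e)) + Q e (\<delta> e)"
    by (metis tp_add_middle tripotent_Q_L_L_Q(1)[OF assms(2)])
  then show ?thesis
    by (simp add: algebra_simps eq_neg_iff_add_eq_0)
qed

lemma peirce2_tp_unit:
  assumes "tripotent jp st e" and "a \<in> peirce2 jp st e"
  shows "tp (prod_e jp st e) (star_e jp st e) a e e = a"
    and "tp (prod_e jp st e) (star_e jp st e) e e a = a"
    and "tp (prod_e jp st e) (star_e jp st e) e a e = Q e a"
proof -
  have e: "tp jp st e e e = e"
    using assms(1) by (simp add: tripotent_def)
  have unit: "prod_e jp st e e v = v" "prod_e jp st e v e = v" if "tp jp st e e v = v" for v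
    using that tp_commute[of v e e] by (simp_all add: prod_e_def)
  have "tp jp st e e a = a"
    using assms(2) by (simp add: peirce2_def)
  moreover have "tp jp st e e (Q e a) = Q e a"
    using tripotent_Q_L_L_Q(2)[OF assms(1)] .
  ultimately show "tp (prod_e jp st e) (star_e jp st e) a e e = a"
    and "tp (prod_e jp st e) (star_e jp st e) e e a = a"
    and "tp (prod_e jp st e) (star_e jp st e) e a e = Q e a"
    unfolding tp_def[of "prod_e jp st e"] using unit[OF e] unit by (simp_all add: star_e_def e)
qed

lemma peirce2_triple_derivation_tripotent_Q:
  assumes "triple_derivation_on (peirce2 jp st e) sc (prod_e jp st e) (star_e jp st e) \<delta>"
    and "tripotent jp st e"
  shows "Q e (\<delta> e) = - \<delta> e"
proof -
  have e2: "e \<in> peirce2 jp st e"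
    using assms(2) by (simp add: tripotent_def peirce2_def)
  then have "\<delta> e \<in> peirce2 jp st e"
    using assms(1) by (auto simp: triple_derivation_on_def)
  moreover have "\<delta> (tp (prod_e jp st e) (star_e jp st e) e e e) =
      tp (prod_e jp st e) (star_e jp st e) (\<delta> e) e e + tp (prod_e jp st e) (star_e jp st e) e (\<delta> e) e
      + tp (prod_e jp st e) (star_e jp st e) e e (\<delta> e)"
    using assms(1) e2 by (simp add: triple_derivation_on_def)
  ultimately have "\<delta> e = \<delta> e + Q e (\<delta> e) + \<delta> e"
    by (simp add: peirce2_tp_unit[OF assms(2)] e2)
  then show ?thesis
    by (simp add: algebra_simps eq_neg_iff_add_eq_0)
qed

end

lemma JBstar_algebra_jordan_star_algebra:
  "JBstar_algebra sc jp st \<Longrightarrow> jordan_star_algebra jp st"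
  unfolding JBstar_algebra_def by unfold_locales auto

theorem mainTheorem12:
  fixes sc :: "complex \<Rightarrow> 'a::banach \<Rightarrow> 'a"
    and jp :: "'a \<Rightarrow> 'a \<Rightarrow> 'a" and st :: "'a \<Rightarrow> 'a" and u :: 'a
    and T \<delta> \<delta>e :: "'a \<Rightarrow> 'a" and e \<xi> \<xi>e :: 'a
  assumes A: "unital_JBstar_algebra sc jp st u"
    and T_bdd: "bounded_linear T" and T_lin: "clinear_map sc T"
    and T_der: "triple_derivable_orth jp st T"
    and e_trip: "tripotent jp st e"
    and \<delta>_der: "triple_derivation_on UNIV sc jp st \<delta>"
    and \<xi>_c: "\<xi> \<in> centre_on UNIV jp" and \<xi>_sa: "st \<xi> = \<xi>"
    and T_eq: "\<forall>a. T a = \<delta> a + jp \<xi> a"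
    and \<delta>e_der: "triple_derivation_on (peirce2 jp st e) sc (prod_e jp st e) (star_e jp st e) \<delta>e"
    and \<xi>e_c: "\<xi>e \<in> centre_on (peirce2 jp st e) (prod_e jp st e)"
    and \<xi>e_sa: "star_e jp st e \<xi>e = \<xi>e"
    and Te_eq: "\<forall>a\<in>peirce2 jp st e. P2 jp st e (T a) = \<delta>e a + prod_e jp st e \<xi>e a"
  shows "jp \<xi> e = \<xi>e"
proof -
  interpret jordan_star_algebra jp st
    using A JBstar_algebra_jordan_star_algebra by (auto simp: unital_JBstar_algebra_def)
  have e: "tp jp st e e e = e" and e2: "e \<in> peirce2 jp st e"
    using e_trip by (simp_all add: tripotent_def peirce2_def)
  have Q_\<xi>e: "Q e \<xi>e = \<xi>e" and "\<xi>e \<in> peirce2 jp st e"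
    using \<xi>e_sa \<xi>e_c by (simp_all add: star_e_def centre_on_def)
  then have "prod_e jp st e \<xi>e e = \<xi>e"
    by (simp add: prod_e_def peirce2_def tp_commute[of \<xi>e e e])
  then have "P2 jp st e (\<delta> e) + jp \<xi> e = \<delta>e e + \<xi>e"
    using Te_eq[rule_format, OF e2] T_eq
    by (simp add: P2_def tp_add_middle tp_central_middle[OF \<xi>_c \<xi>_sa] e)
  then have w: "\<xi>e - jp \<xi> e = Q e (Q e (\<delta> e)) - \<delta>e e"
    by (simp add: P2_def algebra_simps)
  have "Q e (\<xi>e - jp \<xi> e) = \<xi>e - jp \<xi> e"
    by (simp add: tp_diff_middle Q_\<xi>e tp_central_middle[OF \<xi>_c \<xi>_sa] e)
  moreover have "Q e (\<xi>e - jp \<xi> e) = - (\<xi>e - jp \<xi> e)"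
    unfolding w using triple_derivation_tripotent_Q_Q[OF \<delta>_der e_trip]
      peirce2_triple_derivation_tripotent_Q[OF \<delta>e_der e_trip]
    by (simp add: tp_diff_middle tp_minus_middle)
  ultimately have "- (\<xi>e - jp \<xi> e) = \<xi>e - jp \<xi> e"
    by metis
  then show ?thesis
    unfolding neg_eq_self_iff by simp
qed

end
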